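(* Let $\alpha=\alpha^0$. For every $\ell\in L_{\mathrm{ext}}\setminus\overline{\mathrm{NE}}(X)$ one has $\mathcal{O}^{\alpha}_\ell=0$ in $H^\bullet(X,\mathbb{C})$. Consequently $B_X^\alpha(x)=\Big(\sum_{\ell\in L_{\mathrm{ext}}}\mathcal{O}_\ell^\alpha x^{\ell+\alpha}\Big)\exp\Big(\sum_{i=1}^r\sum_{j=0}^{n_i}(\log x_{i,j})D_{i,j}\Big)$.
   Context: $N\cong\mathbb{Z}^n$, $M$ dual. $X$ smooth projective toric with fan $\Sigma$ and nef-partition $\Sigma(1)=I_1\sqcup\cdots\sqcup I_r$ (each $E_i=\sum_{\rho\in I_i}D_\rho$ nef), $I_i=\{\rho_{i,1},\dots,\rho_{i,n_i}\}$, $D_{i,j}\in H^2(X,\mathbb{Z})$ the class of the toric divisor of $\rho_{i,j}$ ($j\ge1$), and $D_{i,0}:=-\sum_{j=1}^{n_i}D_{i,j}$. $J=\{(i,j):1\le i\le r,0\le j\le n_i\}$, $\nu_{i,j}=(\rho_{i,j},e_i)$ ($j\ge1$), $\nu_{i,0}=(0,e_i)$ in $N\times\mathbb{Z}^r$, $L_{\mathrm{ext}}=\ker(\mathbb{Z}^J\to N\times\mathbb{Z}^r,\ e_{i,j}\mapsto\nu_{i,j})$, isomorphic (forgetting $(i,0)$-coordinates) to $L\cong H_2(X,\mathbb{Z})$, $C\mapsto(D_{i,j}\cdot C)_{j\ge1}$; the Mori cone $\overline{\mathrm{NE}}(X)$ (closed cone of curves) is thereby a cone in $L_{\mathrm{ext}}\otimes\mathbb{R}$.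 $\alpha^0\in\mathbb{C}^J$ has $\alpha^0_{i,0}=-1/2$ and $\alpha^0_{i,j}=0$ for $j\ge1$. For $\ell\in\mathbb{Z}^J$ and $\alpha\in\mathbb{C}^J$, $$\mathcal{O}^\alpha_\ell=\frac{\prod_{i=1}^r\Gamma(D_{i,0}+\alpha_{i,0}+1)}{\prod_{i=1}^r\prod_{j=0}^{n_i}\Gamma(D_{i,j}+\ell_{i,j}+\alpha_{i,j}+1)}\in H^\bullet(X,\mathbb{C}),$$ interpreted as follows: for $j\ge1$, $1/\Gamma(D_{i,j}+\ell_{i,j}+\alpha_{i,j}+1)$ is obtained by substituting the nilpotent class $D_{i,j}$ for $z$ in the Taylor expansion at $z=0$ of the entire function $1/\Gamma(z+\ell_{i,j}+\alpha_{i,j}+1)$; for $j=0$, the factor $\Gamma(D_{i,0}+\alpha_{i,0}+1)/\Gamma(D_{i,0}+\ell_{i,0}+\alpha_{i,0}+1)$ is obtained by substituting $D_{i,0}$ into the Taylor expansion at $z=0$ of $\Gamma(z+\alpha_{i,0}+1)/\Gamma(z+\ell_{i,0}+\alpha_{i,0}+1)$ (holomorphic near $0$ for $\alpha=\alpha^0$). The cohomology-valued $B$-series is $B_X^\alpha(x)=\Big(\sum_{\ell\in\overline{\mathrm{NE}}(X)\cap L_{\mathrm{ext}}}\mathcal{O}_\ell^\alpha x^{\ell+\alpha}\Big)\exp\Big(\sum_{(i,j)\in J}(\log x_{i,j})D_{i,j}\Big)$, an element of $\mathbb{C}[[x]]$ (with the monomials $x^{\alpha}$ and $\log x_{i,j}$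 adjoined) tensored with $H^\bullet(X,\mathbb{C})$. *)

theory Defs
  imports "HOL-Analysis.Analysis" "HOL-Library.Poly_Mapping"
begin

text \<open>N = int^'n. Rays are indexed by a finite set R of type 'r with primitive
generators v. A simplicial fan is given by the set Sig of its cones, each cone
being the set of (indices of) rays spanning it.\<close>

definition realv :: "int^'n \<Rightarrow> real^'n" where
  "realv x = (\<chi> k. real_of_int (x $ k))"

definition idot :: "int^'n \<Rightarrow> int^'n \<Rightarrow> int" where
  "idot m x = (\<Sum>k\<in>UNIV. m $ k * x $ k)"

definition rcone :: "('r \<Rightarrow> int^'n) \<Rightarrow> 'r set \<Rightarrow> (real^'n) set" where
  "rcone v \<sigma> = {\<Sum>\<rho>\<in>\<sigma>. t \<rho> *\<^sub>R realv (v \<rho>) | t. \<forall>\<rho>\<in>\<sigma>. t \<rho> \<ge> 0}"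

text \<open>A cone is smooth if its ray generators are prt of a Z-basis of N,
i.e. they are distinct rows of a unimodular integer matrix.\<close>
definition smooth_cone :: "('r \<Rightarrow> int^'n) \<Rightarrow> 'r set \<Rightarrow> bool" where
  "smooth_cone v \<sigma> = (\<exists>(A::int^'n^'n) f. inj_on f \<sigma> \<and> (\<forall>\<rho>\<in>\<sigma>. A $ f \<rho> = v \<rho>)
       \<and> (det A = 1 \<or> det A = -1))"

definition smooth_complete_fan :: "'r set \<Rightarrow> ('r \<Rightarrow> int^'n) \<Rightarrow> 'r set set \<Rightarrow> bool" where
  "smooth_complete_fan R v Sig =
     (finite R \<and> (\<forall>\<sigma>\<in>Sig. \<sigma> \<subseteq> R) \<and> (\<forall>\<sigma>\<in>Sig. \<forall>\<tau>. \<tau> \<subseteq> \<sigma> \<longrightarrow> \<tau> \<in> Sig)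
      \<and> (\<forall>\<rho>\<in>R. {\<rho>} \<in> Sig) \<and> (\<forall>\<sigma>\<in>Sig. smooth_cone v \<sigma>)
      \<and> (\<forall>\<sigma>\<in>Sig. \<forall>\<tau>\<in>Sig. rcone v \<sigma> \<inter> rcone v \<tau> = rcone v (\<sigma> \<inter> \<tau>))
      \<and> (\<Union>\<sigma>\<in>Sig. rcone v \<sigma>) = UNIV)"

definition max_cone :: "'r set set \<Rightarrow> 'r set \<Rightarrow> bool" where
  "max_cone Sig \<sigma> = (\<sigma> \<in> Sig \<and> (\<forall>\<tau>\<in>Sig. \<sigma> \<subseteq> \<tau> \<longrightarrow> \<tau> = \<sigma>))"

text \<open>The R-divisor sum a_rho D_rho is nef iff its support function is convex:
on every maximal cone it is given by some m, with the inequality on all rays.\<close>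
definition nef_div :: "'r set \<Rightarrow> ('r \<Rightarrow> int^'n) \<Rightarrow> 'r set set \<Rightarrow> ('r \<Rightarrow> real) \<Rightarrow> bool" where
  "nef_div R v Sig a = (\<forall>\<sigma>. max_cone Sig \<sigma> \<longrightarrow>
     (\<exists>m::real^'n. (\<forall>\<rho>\<in>\<sigma>. inner m (realv (v \<rho>)) = - a \<rho>)
                 \<and> (\<forall>\<rho>\<in>R. inner m (realv (v \<rho>)) \<ge> - a \<rho>)))"

text \<open>Ample (integral) divisor: strictly convex support function.\<close>
definition ample_div :: "'r set \<Rightarrow> ('r \<Rightarrow> int^'n) \<Rightarrow> 'r set set \<Rightarrow> ('r \<Rightarrow> int) \<Rightarrow> bool" where
  "ample_div R v Sig a = (\<forall>\<sigma>. max_cone Sig \<sigma> \<longrightarrow>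
     (\<exists>m::int^'n. (\<forall>\<rho>\<in>\<sigma>. idot m (v \<rho>) = - a \<rho>)
                 \<and> (\<forall>\<rho>\<in>R - \<sigma>. idot m (v \<rho>) > - a \<rho>)))"

definition projective_fan :: "'r set \<Rightarrow> ('r \<Rightarrow> int^'n) \<Rightarrow> 'r set set \<Rightarrow> bool" where
  "projective_fan R v Sig = (\<exists>a. ample_div R v Sig a)"

text \<open>Nef-partition: R is partitioned into the nonempty blocks
I_i = {rho in R. prt rho = i}, i in I, and each E_i is nef.\<close>
definition nef_partition ::
  "'r set \<Rightarrow> ('r \<Rightarrow> int^'n) \<Rightarrow> 'r set set \<Rightarrow> 'i set \<Rightarrow> ('r \<Rightarrow> 'i) \<Rightarrow> bool" where
  "nef_partition R v Sig I prt =
     (finite I \<and> (\<forall>\<rho>\<in>R. prt \<rho> \<in> I) \<and> (\<forall>i\<in>I. \<exists>\<rho>\<in>R. prt \<rho> = i)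
      \<and> (\<forall>i\<in>I. nef_div R v Sig (\<lambda>\<rho>. if prt \<rho> = i then 1 else 0)))"

text \<open>The index set J is R + I: Inl rho stands for (i,j) with rho = rho_{i,j}, j \<ge> 1,
and Inr i stands for (i,0).\<close>

definition Lext :: "'r set \<Rightarrow> ('r \<Rightarrow> int^'n) \<Rightarrow> 'i set \<Rightarrow> ('r \<Rightarrow> 'i) \<Rightarrow> ('r + 'i \<Rightarrow> int) set" where
  "Lext R v I prt = {l. (\<forall>\<rho>. \<rho> \<notin> R \<longrightarrow> l (Inl \<rho>) = 0) \<and> (\<forall>i. i \<notin> I \<longrightarrow> l (Inr i) = 0)
      \<and> (\<Sum>\<rho>\<in>R. l (Inl \<rho>) *s v \<rho>) = 0
      \<and> (\<forall>i\<in>I. l (Inr i) + (\<Sum>\<rho>\<in>{\<rho>\<in>R. prt \<rho> = i}. l (Inl \<rho>)) = 0)}"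

definition LextR :: "'r set \<Rightarrow> ('r \<Rightarrow> int^'n) \<Rightarrow> 'i set \<Rightarrow> ('r \<Rightarrow> 'i) \<Rightarrow> ('r + 'i \<Rightarrow> real) set" where
  "LextR R v I prt = {l. (\<forall>\<rho>. \<rho> \<notin> R \<longrightarrow> l (Inl \<rho>) = 0) \<and> (\<forall>i. i \<notin> I \<longrightarrow> l (Inr i) = 0)
      \<and> (\<Sum>\<rho>\<in>R. l (Inl \<rho>) *\<^sub>R realv (v \<rho>)) = 0
      \<and> (\<forall>i\<in>I. l (Inr i) + (\<Sum>\<rho>\<in>{\<rho>\<in>R. prt \<rho> = i}. l (Inl \<rho>)) = 0)}"

text \<open>Mori cone (closed cone of curves) inside L_ext tensor R, via
C |-> (D_rho . C): by Kleiman duality it is the dual of the nef cone.\<close>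
definition mori_ext ::
  "'r set \<Rightarrow> ('r \<Rightarrow> int^'n) \<Rightarrow> 'r set set \<Rightarrow> 'i set \<Rightarrow> ('r \<Rightarrow> 'i) \<Rightarrow> ('r + 'i \<Rightarrow> real) set" where
  "mori_ext R v Sig I prt = {l \<in> LextR R v I prt.
      \<forall>a. nef_div R v Sig a \<longrightarrow> (\<Sum>\<rho>\<in>R. a \<rho> * l (Inl \<rho>)) \<ge> 0}"

type_synonym 'r cpoly = "('r \<Rightarrow>\<^sub>0 nat) \<Rightarrow>\<^sub>0 complex"

definition pvar :: "'r \<Rightarrow> 'r cpoly" where
  "pvar \<rho> = Poly_Mapping.single (Poly_Mapping.single \<rho> 1) 1"

definition pconst :: "complex \<Rightarrow> 'r cpoly" where
  "pconst c = Poly_Mapping.single 0 c"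

definition ideal_gen :: "'a::comm_ring_1 set \<Rightarrow> 'a set" where
  "ideal_gen G = {p. \<exists>F c. finite F \<and> F \<subseteq> G \<and> p = (\<Sum>g\<in>F. c g * g)}"

text \<open>A polynomial in the D_rho represents 0 in H(X,C) iff it lies in this ideal.\<close>
definition coh_ideal :: "'r set \<Rightarrow> ('r \<Rightarrow> int^'n) \<Rightarrow> 'r set set \<Rightarrow> 'r cpoly set" where
  "coh_ideal R v Sig = ideal_gen
     ({\<Prod>\<rho>\<in>S. pvar \<rho> | S. S \<subseteq> R \<and> S \<notin> Sig}
      \<union> range (\<lambda>k. \<Sum>\<rho>\<in>R. pconst (of_int (v \<rho> $ k)) * pvar \<rho>))"

text \<open>Substituting a nilpotent class p (of degree \<ge> 1) into the Taylor expansion at 0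
of f; terms of degree > N = dim X vanish in cohomology, so we truncate there.\<close>
definition nil_subst :: "nat \<Rightarrow> (complex \<Rightarrow> complex) \<Rightarrow> 'r cpoly \<Rightarrow> 'r cpoly" where
  "nil_subst N f p = (\<Sum>k\<le>N. pconst ((deriv ^^ k) f 0 / fact k) * p ^ k)"

definition Dzero :: "'r set \<Rightarrow> ('r \<Rightarrow> 'i) \<Rightarrow> 'i \<Rightarrow> 'r cpoly" where
  "Dzero R prt i = - (\<Sum>\<rho>\<in>{\<rho>\<in>R. prt \<rho> = i}. pvar \<rho>)"

definition Ocal ::
  "'r set \<Rightarrow> ('r \<Rightarrow> int^'n) \<Rightarrow> 'i set \<Rightarrow> ('r \<Rightarrow> 'i) \<Rightarrow> ('r + 'i \<Rightarrow> complex)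
   \<Rightarrow> ('r + 'i \<Rightarrow> int) \<Rightarrow> 'r cpoly" where
  "Ocal R v I prt \<alpha> l =
     (\<Prod>i\<in>I. nil_subst CARD('n)
        (\<lambda>z. Gamma (z + \<alpha> (Inr i) + 1) * rGamma (z + of_int (l (Inr i)) + \<alpha> (Inr i) + 1))
        (Dzero R prt i))
   * (\<Prod>\<rho>\<in>R. nil_subst CARD('n)
        (\<lambda>z. rGamma (z + of_int (l (Inl \<rho>)) + \<alpha> (Inl \<rho>) + 1)) (pvar \<rho>))"

definition alpha0 :: "'r + 'i \<Rightarrow> complex" where
  "alpha0 j = (case j of Inl _ \<Rightarrow> 0 | Inr _ \<Rightarrow> - 1/2)"

end

theory Submission
  imports Defs
begin

text \<open>
  Let \<open>S\<close> be the set of rays \<open>\<rho>\<close> with \<open>\<ell>\<^sub>\<rho> < 0\<close>. If \<open>S\<close> spanned a cone, then for a maximal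
  cone \<open>\<sigma> \<supseteq> S\<close> and any nef divisor \<open>a\<close>, with \<open>m\<close> the linear function representing its support
  function on \<open>\<sigma>\<close>, we would get \<open>\<Sum> a\<^sub>\<rho> \<ell>\<^sub>\<rho> = \<Sum> (a\<^sub>\<rho> + \<langle>m, v\<^sub>\<rho>\<rangle>) \<ell>\<^sub>\<rho> \<ge> 0\<close>, since the
  first factor vanishes on \<open>\<sigma>\<close> and both factors are nonnegative off \<open>\<sigma>\<close>; so \<open>\<ell>\<close> would lie in
  the Mori cone. Hence for \<open>\<ell>\<close> outside the Mori cone, \<open>\<Prod>\<^sub>\<rho>\<^sub>\<in>\<^sub>S D\<^sub>\<rho>\<close> is a Stanley-Reisner
  monomial. For \<open>\<rho> \<in> S\<close>, \<open>1/\<Gamma>(z + \<ell>\<^sub>\<rho> + 1)\<close> vanishes at \<open>z = 0\<close>, so its value at \<open>D\<^sub>\<rho>\<close> is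
  divisible by \<open>D\<^sub>\<rho>\<close>, and \<open>O\<^sub>\<ell>\<close> is a multiple of that monomial.
\<close>

lemma zero_mem_ideal_gen: "0 \<in> ideal_gen G"
  unfolding ideal_gen_def by (auto intro: exI[of _ "{}"])

lemma mem_ideal_gen_if_dvd:
  assumes "g \<in> G" and "g dvd p"
  shows "p \<in> ideal_gen G"
proof -
  from \<open>g dvd p\<close> obtain q where "p = q * g"
    by (metis dvd_def mult.commute)
  then show ?thesis
    unfolding ideal_gen_def using \<open>g \<in> G\<close> by (auto intro!: exI[of _ "{g}"])
qed

lemma coh_ideal_if_dvd_non_face:
  assumes "S \<subseteq> R" and "S \<notin> Sig" and "(\<Prod>\<rho>\<in>S. pvar \<rho>) dvd p"
  shows "p \<in> coh_ideal R v Sig"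
  unfolding coh_ideal_def using assms by (blast intro: mem_ideal_gen_if_dvd)

lemma dvd_nil_subst:
  assumes "f 0 = 0"
  shows "p dvd nil_subst N f p"
  unfolding nil_subst_def
proof (rule dvd_sum)
  fix k assume "k \<in> {..N}"
  show "p dvd pconst ((deriv ^^ k) f 0 / fact k) * p ^ k"
  proof (cases k)
    case 0
    then show ?thesis using assms by (simp add: pconst_def)
  qed simp
qed

lemma prod_pvar_dvd_Ocal:
  assumes "finite R" and "S \<subseteq> R"
    and "\<And>\<rho>. \<rho> \<in> S \<Longrightarrow> l (Inl \<rho>) < 0 \<and> \<alpha> (Inl \<rho>) = 0"
  shows "(\<Prod>\<rho>\<in>S. pvar \<rho>) dvd Ocal R v I prt \<alpha> l"
proof -
  have "(\<Prod>\<rho>\<in>S. pvar \<rho>) dvd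
    (\<Prod>\<rho>\<in>R. nil_subst CARD('n) (\<lambda>z. rGamma (z + of_int (l (Inl \<rho>)) + \<alpha> (Inl \<rho>) + 1)) (pvar \<rho>))"
  proof (rule prod_dvd_prod_subset2[OF assms(1,2)])
    fix \<rho> assume "\<rho> \<in> S"
    then have "l (Inl \<rho>) + 1 \<le> 0" and "\<alpha> (Inl \<rho>) = 0"
      using assms(3)[of \<rho>] by auto
    moreover from this(1) have "rGamma (of_int (l (Inl \<rho>) + 1) :: complex) = 0"
      by (subst rGamma_of_int) simp
    ultimately show "pvar \<rho> dvd
      nil_subst CARD('n) (\<lambda>z. rGamma (z + of_int (l (Inl \<rho>)) + \<alpha> (Inl \<rho>) + 1)) (pvar \<rho>)"
      by (intro dvd_nil_subst) simp
  qed
  then show ?thesis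
    unfolding Ocal_def by (rule dvd_mult)
qed

lemma of_int_mem_LextR:
  assumes "l \<in> Lext R v I prt"
  shows "(\<lambda>j. real_of_int (l j)) \<in> LextR R v I prt"
proof -
  have "(\<Sum>\<rho>\<in>R. real_of_int (l (Inl \<rho>)) *\<^sub>R realv (v \<rho>)) = realv (\<Sum>\<rho>\<in>R. l (Inl \<rho>) *s v \<rho>)"
    by (simp add: realv_def vec_eq_iff sum_component)
  also have "\<dots> = 0"
    using assms by (simp add: Lext_def realv_def vec_eq_iff)
  finally have "(\<Sum>\<rho>\<in>R. real_of_int (l (Inl \<rho>)) *\<^sub>R realv (v \<rho>)) = 0" .
  moreover have "real_of_int (l (Inr i)) + (\<Sum>\<rho>\<in>{\<rho>\<in>R. prt \<rho> = i}. real_of_int (l (Inl \<rho>))) = 0"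
    if "i \<in> I" for i
    using assms that unfolding Lext_def by (simp flip: of_int_sum of_int_add)
  ultimately show ?thesis
    using assms unfolding Lext_def LextR_def by simp
qed

lemma ex_max_cone_superset:
  assumes "finite R" and "\<forall>\<sigma>\<in>Sig. \<sigma> \<subseteq> R" and "\<tau> \<in> Sig"
  shows "\<exists>\<sigma>. max_cone Sig \<sigma> \<and> \<tau> \<subseteq> \<sigma>"
proof -
  have "finite Sig"
    using assms(1,2) by (meson Pow_iff finite_Pow_iff rev_finite_subset subsetI)
  then obtain \<sigma> where "\<sigma> \<in> Sig" "\<tau> \<subseteq> \<sigma>" "\<forall>\<sigma>'\<in>Sig. \<sigma> \<subseteq> \<sigma>' \<longrightarrow> \<sigma> = \<sigma>'"
    using finite_has_maximal2[OF _ assms(3)] by auto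
  then show ?thesis
    unfolding max_cone_def by auto
qed

lemma mem_mori_ext_if_nonneg_off_max_cone:
  fixes v :: "'r \<Rightarrow> int^'n"
  assumes "l \<in> LextR R v I prt" and "max_cone Sig \<sigma>"
    and nonneg: "\<And>\<rho>. \<rho> \<in> R - \<sigma> \<Longrightarrow> l (Inl \<rho>) \<ge> 0"
  shows "l \<in> mori_ext R v Sig I prt"
  unfolding mori_ext_def
proof (intro CollectI conjI allI impI)
  fix a assume "nef_div R v Sig a"
  then obtain m :: "real^'n" where on_\<sigma>: "\<forall>\<rho>\<in>\<sigma>. inner m (realv (v \<rho>)) = - a \<rho>"
    and above: "\<forall>\<rho>\<in>R. inner m (realv (v \<rho>)) \<ge> - a \<rho>"
    using \<open>max_cone Sig \<sigma>\<close> unfolding nef_div_def by blast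
  have "(\<Sum>\<rho>\<in>R. l (Inl \<rho>) * inner m (realv (v \<rho>)))
      = inner m (\<Sum>\<rho>\<in>R. l (Inl \<rho>) *\<^sub>R realv (v \<rho>))"
    by (simp add: inner_sum_right mult.commute)
  also have "\<dots> = 0"
    using \<open>l \<in> LextR R v I prt\<close> unfolding LextR_def by simp
  finally have "(\<Sum>\<rho>\<in>R. a \<rho> * l (Inl \<rho>)) = (\<Sum>\<rho>\<in>R. (a \<rho> + inner m (realv (v \<rho>))) * l (Inl \<rho>))"
    by (simp add: algebra_simps sum.distrib)
  also have "\<dots> \<ge> 0"
  proof (rule sum_nonneg)
    fix \<rho> assume "\<rho> \<in> R"
    show "0 \<le> (a \<rho> + inner m (realv (v \<rho>))) * l (Inl \<rho>)"
      using on_\<sigma> above nonneg \<open>\<rho> \<in> R\<close> by (cases "\<rho> \<in> \<sigma>") force+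
  qed
  finally show "(\<Sum>\<rho>\<in>R. a \<rho> * l (Inl \<rho>)) \<ge> 0" .
qed (use assms(1) in simp)

lemma negative_support_not_in_fan:
  assumes "finite R" and "\<forall>\<sigma>\<in>Sig. \<sigma> \<subseteq> R"
    and "l \<in> Lext R v I prt" and "(\<lambda>j. real_of_int (l j)) \<notin> mori_ext R v Sig I prt"
  shows "{\<rho>\<in>R. l (Inl \<rho>) < 0} \<notin> Sig"
proof
  assume "{\<rho>\<in>R. l (Inl \<rho>) < 0} \<in> Sig"
  then obtain \<sigma> where "max_cone Sig \<sigma>" and negative_in_\<sigma>: "{\<rho>\<in>R. l (Inl \<rho>) < 0} \<subseteq> \<sigma>"
    using ex_max_cone_superset[OF assms(1,2)] by blast
  have "real_of_int (l (Inl \<rho>)) \<ge> 0" if "\<rho> \<in> R - \<sigma>" for \<rho>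
    using that negative_in_\<sigma> by (auto simp: not_less)
  then have "(\<lambda>j. real_of_int (l j)) \<in> mori_ext R v Sig I prt"
    using mem_mori_ext_if_nonneg_off_max_cone[OF of_int_mem_LextR[OF assms(3)] \<open>max_cone Sig \<sigma>\<close>]
    by blast
  with assms(4) show False ..
qed

theorem mainTheorem11:
  fixes R :: "'r set" and v :: "'r \<Rightarrow> int^'n" and Sig :: "'r set set"
    and I :: "'i set" and prt :: "'r \<Rightarrow> 'i"
  assumes "smooth_complete_fan R v Sig"
    and "projective_fan R v Sig"
    and "nef_partition R v Sig I prt"
  shows "(\<forall>l\<in>Lext R v I prt. (\<lambda>j. real_of_int (l j)) \<notin> mori_ext R v Sig I prt
            \<longrightarrow> Ocal R v I prt alpha0 l \<in> coh_ideal R v Sig)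
    \<and> (\<forall>l\<in>Lext R v I prt.
            (if (\<lambda>j. real_of_int (l j)) \<in> mori_ext R v Sig I prt
             then Ocal R v I prt alpha0 l else 0) - Ocal R v I prt alpha0 l
            \<in> coh_ideal R v Sig)"
proof -
  have fin: "finite R" and faces: "\<forall>\<sigma>\<in>Sig. \<sigma> \<subseteq> R"
    using assms(1) unfolding smooth_complete_fan_def by auto
  have vanish: "p \<in> coh_ideal R v Sig"
    if "l \<in> Lext R v I prt" and "(\<lambda>j. real_of_int (l j)) \<notin> mori_ext R v Sig I prt"
      and "p = Ocal R v I prt alpha0 l \<or> p = - Ocal R v I prt alpha0 l" for l p
  proof (rule coh_ideal_if_dvd_non_face)
    let ?S = "{\<rho>\<in>R. l (Inl \<rho>) < 0}"
    show "?S \<subseteq> R" by blast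
    show "?S \<notin> Sig" using negative_support_not_in_fan[OF fin faces that(1,2)] .
    have "(\<Prod>\<rho>\<in>?S. pvar \<rho>) dvd Ocal R v I prt alpha0 l"
      by (rule prod_pvar_dvd_Ocal[OF fin]) (auto simp: alpha0_def)
    then show "(\<Prod>\<rho>\<in>?S. pvar \<rho>) dvd p" using that(3) by auto
  qed
  show ?thesis
    using vanish by (auto simp: coh_ideal_def zero_mem_ideal_gen)
qed

end
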